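(* Let $d\ge3$ be odd and define, for $x\in[-1+\tfrac2d,1]$, $m(x)=\big[\tfrac12(1-\tfrac1d)(1-\tfrac2d+x)\big]^{1/2}+\tfrac1d$. Consider the convex set $$C=\mathrm{conv}\Big\{\Big(\tfrac1d\operatorname{tr}[U\overline U],\ \tfrac1d|\operatorname{tr}U|^2\Big): U\in U(d)\Big\}\subset\mathbb{R}^2.$$ Then the extreme points of $C$ are exactly $(-1+2/d,0)$, $(1,0)$ and the points $\big(x,\,d\,m(x)^2\big)$ for $x\in[-1+2/d,1]$.
   Context: $\overline U$ is the entrywise complex conjugate. With $\mathbb{F}$ the flip on $\mathbb{C}^d\otimes\mathbb{C}^d$, $\hat{\mathbb{F}}=d|\Omega\rangle\langle\Omega|$, $|\Omega\rangle=d^{-1/2}\sum_j|jj\rangle$, the pair $(\frac1d\operatorname{tr}[U\overline U],\frac1d|\operatorname{tr}U|^2)$ equals the expectation values $(\operatorname{tr}[\rho\mathbb{F}],\operatorname{tr}[\rho\hat{\mathbb{F}}])$ in the state $\rho=(\mathbb{1}\otimes U)|\Omega\rangle\langle\Omega|(\mathbb{1}\otimes U^\dagger)$, so $C$ is the coordinate image of the $O(d)$-covariant mixtures of unitary channels. *)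

theory Defs
  imports "HOL-Analysis.Analysis"
begin

text \<open>Complex d x d matrices indexed by a finite type 'n, with d = CARD('n).\<close>

definition mtrace :: "complex^'n^'n \<Rightarrow> complex" where
  "mtrace A = (\<Sum>i\<in>UNIV. A $ i $ i)"

definition mconj :: "complex^'n^'n \<Rightarrow> complex^'n^'n" where
  "mconj A = (\<chi> i j. cnj (A $ i $ j))"

definition madj :: "complex^'n^'n \<Rightarrow> complex^'n^'n" where
  "madj A = (\<chi> i j. cnj (A $ j $ i))"

definition unitary :: "complex^'n^'n \<Rightarrow> bool" where
  "unitary U \<longleftrightarrow> U ** madj U = mat 1 \<and> madj U ** U = mat 1"

text \<open>The point (tr[U conj U]/d, |tr U|^2/d); tr[U conj U] is real, we take its real part.\<close>
definition upoint :: "complex^'n^'n \<Rightarrow> real \<times> real" where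
  "upoint U = (Re (mtrace (U ** mconj U)) / real CARD('n),
               (cmod (mtrace U))\<^sup>2 / real CARD('n))"

definition mfun :: "real \<Rightarrow> real \<Rightarrow> real" where
  "mfun d x = sqrt ((1/2) * (1 - 1/d) * (1 - 2/d + x)) + 1/d"

end

theory Submission
  imports Defs
begin

text \<open>For a unitary \<open>U\<close> put \<open>t = tr (U conj U)\<close>. In odd dimension the antisymmetric part
  \<open>U - U\<^sup>T\<close> is singular, so the symmetric part \<open>S = (U + U\<^sup>T)/2\<close> agrees with \<open>U\<close> on some unit
  vector. In an orthonormal basis starting with that vector \<open>S\<close> has a unit column, and
  Cauchy--Schwarz on the remaining diagonal gives \<open>|tr U| = |tr S| \<le> 1 + \<surd>((d - 1)(\<parallel>S\<parallel>\<^sup>2 - 1))\<close>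
  with \<open>\<parallel>S\<parallel>\<^sup>2 = (d + t)/2\<close>. So every point lies in the region above \<open>[-1 + 2/d, 1] \<times> {0}\<close>
  and below the graph of \<open>d m(x)\<^sup>2\<close>, which is strictly concave. Block-diagonal unitaries
  \<open>1 \<oplus> R \<oplus> \<dots> \<oplus> R\<close> built from rotations attain the whole graph and two further ones attain the
  corners, so \<open>C\<close> is exactly that region; its extreme points are the two corners and the graph.\<close>

section \<open>Unitary matrices, traces and the Frobenius norm\<close>

definition cinner :: "complex^'n \<Rightarrow> complex^'n \<Rightarrow> complex" where
  "cinner x y = (\<Sum>i\<in>UNIV. cnj (x$i) * y$i)"

definition frobenius_sq :: "complex^'n^'m \<Rightarrow> real" where
  "frobenius_sq X = (\<Sum>i\<in>UNIV. \<Sum>j\<in>UNIV. (cmod (X$i$j))\<^sup>2)"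

lemma norm_vec_power2: "(norm x)\<^sup>2 = (\<Sum>i\<in>UNIV. (norm (x$i))\<^sup>2)"
  for x :: "'a::real_normed_vector^'n"
  by (simp add: norm_vec_def L2_set_def sum_nonneg)

lemma cinner_self: "cinner x x = complex_of_real ((norm x)\<^sup>2)"
  unfolding cinner_def norm_vec_power2 of_real_sum complex_norm_square by (simp add: mult.commute)

lemma cinner_diff_left: "cinner (x - y) z = cinner x z - cinner y z"
  by (simp add: cinner_def algebra_simps sum_subtractf)

lemma cinner_diff_right: "cinner x (y - z) = cinner x y - cinner x z"
  by (simp add: cinner_def algebra_simps sum_subtractf)

lemma cinner_axis_left: "cinner (axis a 1) y = y$a" for y :: "complex^'n"
proof -
  have "cnj ((axis a 1 :: complex^'n)$i) * y$i = (if i = a then y$a else 0)" for i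
    by (simp add: axis_def)
  thus ?thesis by (simp add: cinner_def)
qed

lemma cinner_axis_right: "cinner y (axis a 1) = cnj (y$a)" for y :: "complex^'n"
proof -
  have "cnj (y$i) * (axis a 1 :: complex^'n)$i = (if i = a then cnj (y$a) else 0)" for i
    by (simp add: axis_def)
  thus ?thesis by (simp add: cinner_def)
qed

lemma cinner_matrix_vector_left: "cinner (A *v x) y = cinner x (madj A *v y)"
proof -
  have "cinner (A *v x) y = (\<Sum>i\<in>UNIV. \<Sum>j\<in>UNIV. cnj (A$i$j) * cnj (x$j) * y$i)"
    by (simp add: cinner_def matrix_vector_mult_def sum_distrib_right)
  also have "\<dots> = (\<Sum>j\<in>UNIV. \<Sum>i\<in>UNIV. cnj (A$i$j) * cnj (x$j) * y$i)"
    by (rule sum.swap)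
  also have "\<dots> = cinner x (madj A *v y)"
    by (simp add: cinner_def matrix_vector_mult_def madj_def sum_distrib_left mult_ac)
  finally show ?thesis .
qed

lemma norm_scale_vec: "norm (c *s x) = cmod c * norm x" for x :: "complex^'n"
proof -
  have "(norm (c *s x))\<^sup>2 = (cmod c * norm x)\<^sup>2"
    by (simp add: norm_vec_power2 norm_mult power_mult_distrib sum_distrib_left)
  thus ?thesis by (simp add: power2_eq_iff_nonneg)
qed

lemma matrix_vector_mult_scale: "A *v (c *s x) = c *s (A *v x)" for A :: "'a::comm_semiring_1^'n^'m"
  by (simp add: vec_eq_iff matrix_vector_mult_def sum_distrib_left mult_ac)

lemma matrix_vector_mult_axis: "(A *v axis a 1)$i = A$i$a" for A :: "'a::semiring_1^'n^'m"
  by (simp add: matrix_vector_mult_def axis_def if_distrib cong: if_cong)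

lemma madj_mult: "madj (A ** B) = madj B ** madj A"
  by (simp add: vec_eq_iff madj_def matrix_matrix_mult_def mult.commute)

lemma madj_madj [simp]: "madj (madj A) = A"
  by (simp add: vec_eq_iff madj_def)

lemma unitary_iff: "unitary U \<longleftrightarrow> U ** madj U = mat 1"
  by (simp add: unitary_def matrix_left_right_inverse[of U])

lemma unitary_madj: "unitary U \<Longrightarrow> unitary (madj U)"
  by (simp add: unitary_def)

lemma unitary_norm:
  assumes "unitary U" shows "norm (U *v x) = norm x"
proof -
  have "complex_of_real ((norm (U *v x))\<^sup>2) = cinner (U *v x) (U *v x)" by (simp add: cinner_self)
  also have "\<dots> = cinner x ((madj U ** U) *v x)"
    by (simp add: cinner_matrix_vector_left matrix_vector_mul_assoc)
  also have "\<dots> = complex_of_real ((norm x)\<^sup>2)" using assms by (simp add: unitary_def cinner_self)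
  finally have "(norm (U *v x))\<^sup>2 = (norm x)\<^sup>2" by (simp only: of_real_eq_iff)
  thus ?thesis by (simp add: power2_eq_iff_nonneg)
qed

lemma mtrace_commute: "mtrace (A ** B) = mtrace (B ** A)"
proof -
  have "mtrace (A ** B) = (\<Sum>i\<in>UNIV. \<Sum>k\<in>UNIV. A$i$k * B$k$i)"
    by (simp add: mtrace_def matrix_matrix_mult_def)
  also have "\<dots> = (\<Sum>k\<in>UNIV. \<Sum>i\<in>UNIV. B$k$i * A$i$k)"
    by (subst sum.swap) (simp add: mult.commute)
  also have "\<dots> = mtrace (B ** A)" by (simp add: mtrace_def matrix_matrix_mult_def)
  finally show ?thesis .
qed

lemma frobenius_sq_eq_mtrace: "complex_of_real (frobenius_sq X) = mtrace (X ** madj X)"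
  by (simp only: frobenius_sq_def mtrace_def of_real_sum complex_norm_square)
     (simp add: matrix_matrix_mult_def madj_def)

lemma mtrace_unitary_similar:
  assumes "unitary W" shows "mtrace (madj W ** X ** W) = mtrace X"
proof -
  have "mtrace (madj W ** X ** W) = mtrace (W ** (madj W ** X))"
    by (rule mtrace_commute)
  also have "W ** (madj W ** X) = X" using assms unfolding unitary_def
    by (simp only: matrix_mul_assoc matrix_mul_lid)
  finally show ?thesis .
qed

lemma frobenius_sq_unitary_similar:
  assumes "unitary W" shows "frobenius_sq (madj W ** X ** W) = frobenius_sq X"
proof -
  have "(madj W ** X ** W) ** madj (madj W ** X ** W) = madj W ** X ** (W ** madj W) ** madj X ** W"
    by (simp add: madj_mult madj_madj matrix_mul_assoc)
  also have "\<dots> = madj W ** (X ** madj X) ** W"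
    using assms unfolding unitary_def by (simp only: matrix_mul_assoc matrix_mul_rid)
  finally have "(madj W ** X ** W) ** madj (madj W ** X ** W) = madj W ** (X ** madj X) ** W" .
  then have "complex_of_real (frobenius_sq (madj W ** X ** W)) = mtrace (madj W ** (X ** madj X) ** W)"
    by (simp add: frobenius_sq_eq_mtrace)
  also have "\<dots> = complex_of_real (frobenius_sq X)"
    using assms by (simp add: mtrace_unitary_similar frobenius_sq_eq_mtrace)
  finally show ?thesis by simp
qed

section \<open>The trace bound\<close>

definition householder :: "complex^'n \<Rightarrow> complex^'n^'n" where
  "householder u = (\<chi> i j. (if i = j then 1 else 0) - complex_of_real (2 / (norm u)\<^sup>2) * u$i * cnj (u$j))"

lemma unitary_householder: "unitary (householder u)"
proof -
  define c where "c = complex_of_real (2 / (norm u)\<^sup>2)"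
  have c2: "c * c * complex_of_real ((norm u)\<^sup>2) = 2 * c"
    by (cases "u = 0") (simp_all add: c_def power2_eq_square)
  have H: "householder u = (\<chi> i j. (if i = j then 1 else 0) - c * u$i * cnj (u$j))"
    by (simp add: householder_def c_def)
  have "madj (householder u) = householder u"
    by (simp add: H c_def madj_def vec_eq_iff)
  moreover have "householder u ** householder u = mat 1"
  proof (clarsimp simp: vec_eq_iff)
    fix i k
    have "(householder u ** householder u)$i$k =
          (\<Sum>j\<in>UNIV. (if i = j then 1 else 0) * (if j = k then 1 else 0))
         - (\<Sum>j\<in>UNIV. (if i = j then 1 else 0) * (c * u$j * cnj (u$k)))
         - (\<Sum>j\<in>UNIV. (c * u$i * cnj (u$j)) * (if j = k then 1 else 0))
         + (c * c * u$i * cnj (u$k)) * cinner u u"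
      by (simp add: H cinner_def matrix_matrix_mult_def algebra_simps
          sum_subtractf sum.distrib sum_distrib_left)
    also have "\<dots> = (if i = k then 1 else 0) - 2 * c * u$i * cnj (u$k)
         + (c * c * complex_of_real ((norm u)\<^sup>2)) * u$i * cnj (u$k)"
      by (simp add: cinner_self if_distrib[of "\<lambda>x. x * _"] if_distrib[of "\<lambda>x. _ * x"] cong: if_cong)
    also have "\<dots> = mat 1 $ i $ k" unfolding c2 by (simp add: mat_def)
    finally show "(householder u ** householder u)$i$k = mat 1 $ i $ k" .
  qed
  ultimately show ?thesis by (simp add: unitary_iff)
qed

text \<open>The reflection in \<open>e\<^sub>a - v\<close> swaps \<open>e\<^sub>a\<close> and \<open>v\<close> because \<open>v\<^sub>a\<close> is real; for \<open>v = e\<^sub>a\<close> it is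
  the identity (division by zero).\<close>
lemma householder_axis:
  fixes v :: "complex^'n"
  assumes v1: "norm v = 1" and va: "Im (v$a) = 0"
  shows "householder (axis a 1 - v) *v axis a 1 = v"
proof -
  define r where "r = Re (v$a)"
  have var: "v$a = complex_of_real r" using va by (simp add: r_def complex_eq_iff)
  define u where "u = axis a 1 - v"
  have "cinner u u = cinner (axis a 1) (axis a 1) - cinner v (axis a 1)
                     - (cinner (axis a 1) v - cinner v v)"
    unfolding u_def cinner_diff_left cinner_diff_right ..
  also have "\<dots> = 2 - 2 * complex_of_real r"
    using v1 var by (simp add: cinner_axis_left cinner_axis_right cinner_self)
  finally have nu: "(norm u)\<^sup>2 = 2 * (1 - r)" by (simp add: cinner_self complex_eq_iff)
  have ua: "cnj (u$a) = complex_of_real (1 - r)" using var by (simp add: u_def axis_def)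
  have "complex_of_real (2 / (norm u)\<^sup>2) * u$i * cnj (u$a) = u$i" for i
  proof (cases "u = 0")
    case False
    hence "1 - r \<noteq> 0" using nu by auto
    thus ?thesis unfolding nu ua by (simp add: field_simps)
  qed simp
  thus ?thesis
    by (simp add: vec_eq_iff householder_def matrix_vector_mult_axis u_def[symmetric])
       (simp add: u_def axis_def)
qed

lemma frobenius_sq_ge_unit_column:
  fixes B :: "complex^'n^'n"
  assumes "norm (column a B) = 1"
  shows "1 + (\<Sum>j\<in>UNIV - {a}. (cmod (B$j$j))\<^sup>2) \<le> frobenius_sq B"
proof -
  have "(norm (column a B))\<^sup>2 = (\<Sum>i\<in>UNIV. (cmod (B$i$a))\<^sup>2)"
    by (simp add: norm_vec_power2 column_def)
  hence col: "(\<Sum>i\<in>UNIV. (cmod (B$i$a))\<^sup>2) = 1" using assms by simp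
  have "frobenius_sq B = (\<Sum>j\<in>UNIV. \<Sum>i\<in>UNIV. (cmod (B$i$j))\<^sup>2)"
    unfolding frobenius_sq_def by (rule sum.swap)
  also have "\<dots> = (\<Sum>i\<in>UNIV. (cmod (B$i$a))\<^sup>2) + (\<Sum>j\<in>UNIV - {a}. \<Sum>i\<in>UNIV. (cmod (B$i$j))\<^sup>2)"
    by (rule sum.remove) auto
  finally have "frobenius_sq B = 1 + (\<Sum>j\<in>UNIV - {a}. \<Sum>i\<in>UNIV. (cmod (B$i$j))\<^sup>2)"
    by (simp only: col)
  thus ?thesis by (simp, intro sum_mono member_le_sum) auto
qed

text \<open>The unit column contributes \<open>1\<close> to the Frobenius norm and at most \<open>1\<close> to the trace; the
  remaining diagonal is handled by Cauchy--Schwarz.\<close>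
lemma trace_bound_unit_column:
  fixes B :: "complex^'n^'n"
  assumes col: "norm (column a B) = 1"
  shows "1 \<le> frobenius_sq B"
    and "cmod (mtrace B) \<le> 1 + sqrt ((real CARD('n) - 1) * (frobenius_sq B - 1))"
proof -
  let ?D = "UNIV - {a}"
  have diag: "(\<Sum>j\<in>?D. (cmod (B$j$j))\<^sup>2) \<le> frobenius_sq B - 1"
    using frobenius_sq_ge_unit_column[OF col] by simp
  moreover have "0 \<le> (\<Sum>j\<in>?D. (cmod (B$j$j))\<^sup>2)" by (simp add: sum_nonneg)
  ultimately show "1 \<le> frobenius_sq B" by linarith
  have "cmod (B$a$a) \<le> norm (column a B)"
    using Finite_Cartesian_Product.norm_nth_le[of "column a B" a] by (simp add: column_def)
  hence Baa: "cmod (B$a$a) \<le> 1" using col by simp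
  have card: "real (card ?D) = real CARD('n) - 1" by (simp add: card_Diff_singleton)
  have "(\<Sum>j\<in>?D. cmod (B$j$j))\<^sup>2 \<le> real (card ?D) * (\<Sum>j\<in>?D. (cmod (B$j$j))\<^sup>2)"
    using Cauchy_Schwarz_ineq_sum[of "\<lambda>j. 1" "\<lambda>j. cmod (B$j$j)" ?D] by simp
  also have "\<dots> \<le> (real CARD('n) - 1) * (frobenius_sq B - 1)"
    unfolding card using diag by (intro mult_left_mono) auto
  finally have off: "(\<Sum>j\<in>?D. cmod (B$j$j)) \<le> sqrt ((real CARD('n) - 1) * (frobenius_sq B - 1))"
    by (rule real_le_rsqrt)
  have "mtrace B = B$a$a + (\<Sum>j\<in>?D. B$j$j)" unfolding mtrace_def by (rule sum.remove) auto
  hence "cmod (mtrace B) \<le> cmod (B$a$a) + cmod (\<Sum>j\<in>?D. B$j$j)"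
    by (simp add: norm_triangle_ineq)
  also have "cmod (\<Sum>j\<in>?D. B$j$j) \<le> (\<Sum>j\<in>?D. cmod (B$j$j))" by (rule norm_sum)
  finally show "cmod (mtrace B) \<le> 1 + sqrt ((real CARD('n) - 1) * (frobenius_sq B - 1))"
    using Baa off by linarith
qed

lemma trace_bound_unit_vector:
  fixes S :: "complex^'n^'n"
  assumes v: "norm v = 1" and Sv: "norm (S *v v) = 1"
  shows "1 \<le> frobenius_sq S"
    and "cmod (mtrace S) \<le> 1 + sqrt ((real CARD('n) - 1) * (frobenius_sq S - 1))"
proof -
  obtain a :: 'n where True by blast
  txt \<open>A phase makes \<open>v\<^sub>a\<close> real, so that a Householder reflection moves \<open>e\<^sub>a\<close> to the new \<open>v\<close>.\<close>
  define c where "c = (if v$a = 0 then 1 else cnj (v$a) / complex_of_real (cmod (v$a)))"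
  have c1: "cmod c = 1" by (simp add: c_def norm_divide)
  have im: "Im (c * v$a) = 0"
    by (simp add: c_def complex_norm_square[symmetric] mult.commute[of "cnj _"]
        Im_divide_of_real del: of_real_power)
  have cv: "norm (c *s v) = 1" using v c1 by (simp add: norm_scale_vec)
  define W where "W = householder (axis a 1 - c *s v)"
  have W: "unitary W" "W *v axis a 1 = c *s v"
    using unitary_householder householder_axis[OF cv] im by (simp_all add: W_def)
  define B where "B = madj W ** S ** W"
  have "column a B = madj W *v (S *v (c *s v))"
    by (simp add: B_def column_def vec_eq_iff matrix_vector_mult_axis[symmetric]
        W(2)[symmetric] matrix_vector_mul_assoc matrix_mul_assoc)
  hence "norm (column a B) = 1"
    using unitary_norm[OF unitary_madj[OF W(1)]] Sv c1
    by (simp add: matrix_vector_mult_scale norm_scale_vec)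
  from trace_bound_unit_column[OF this] show "1 \<le> frobenius_sq S"
    and "cmod (mtrace S) \<le> 1 + sqrt ((real CARD('n) - 1) * (frobenius_sq S - 1))"
    unfolding B_def mtrace_unitary_similar[OF W(1)] frobenius_sq_unitary_similar[OF W(1)] .
qed

lemma odd_antisymmetric_kernel:
  fixes A :: "'a::field_char_0^'n^'n"
  assumes "odd CARD('n)" and "transpose A = - A"
  shows "\<exists>x. x \<noteq> 0 \<and> A *v x = 0"
proof -
  have tr: "transpose A = (\<chi> i. (-1::'a) *s row i A)"
    using assms(2) by (simp add: vec_eq_iff row_def)
  have "det A = det (transpose A)" by simp
  also have "\<dots> = (\<Prod>i\<in>(UNIV::'n set). (-1::'a)) * det (\<chi> i. row i A)"
    unfolding tr using det_rows_mul[of "\<lambda>i::'n. -1::'a" "\<lambda>i. row i A"] by simp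
  also have "(\<chi> i. row i A) = A" by (simp add: vec_eq_iff row_def)
  also have "(\<Prod>i\<in>(UNIV::'n set). (-1::'a)) = -1" using assms(1) by simp
  finally have "det A = -1 * det A" .
  hence "det A = 0" by simp
  hence "\<not> inj ((*v) A)"
    using det_nz_iff_inj_gen[OF matrix_vector_mul_linear_gen, of A] by simp
  then obtain x y where "x \<noteq> y" "A *v x = A *v y" by (auto simp: inj_def)
  hence "x - y \<noteq> 0" "A *v (x - y) = 0" by (auto simp: matrix_vector_mult_diff_distrib)
  thus ?thesis by blast
qed

definition sym_part :: "complex^'n^'n \<Rightarrow> complex^'n^'n" where
  "sym_part X = (\<chi> i j. (X$i$j + X$j$i) / 2)"

lemma mtrace_sym_part: "mtrace (sym_part X) = mtrace X"
  by (simp add: mtrace_def sym_part_def)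

lemma mtrace_mult_mconj: "mtrace (X ** mconj X) = (\<Sum>i\<in>UNIV. \<Sum>j\<in>UNIV. X$i$j * cnj (X$j$i))"
  by (simp add: mtrace_def matrix_matrix_mult_def mconj_def)

lemma frobenius_sq_transpose: "frobenius_sq (transpose X) = frobenius_sq X"
  unfolding frobenius_sq_def transpose_def vec_lambda_beta by (rule sum.swap)

lemma cmod_half_sum_power2:
  "(cmod ((a + b) / 2))\<^sup>2 = ((cmod a)\<^sup>2 + (cmod b)\<^sup>2 + 2 * Re (a * cnj b)) / 4"
  by (simp only: cmod_power2) (simp add: power2_eq_square field_simps)

lemma frobenius_sq_sym_part:
  "frobenius_sq (sym_part X) = (frobenius_sq X + Re (mtrace (X ** mconj X))) / 2"
proof -
  have "frobenius_sq (sym_part X) = (\<Sum>i\<in>UNIV. \<Sum>j\<in>UNIV.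
          ((cmod (X$i$j))\<^sup>2 + (cmod (X$j$i))\<^sup>2 + 2 * Re (X$i$j * cnj (X$j$i))) / 4)"
    by (simp only: frobenius_sq_def sym_part_def vec_lambda_beta cmod_half_sum_power2)
  also have "\<dots> = (\<Sum>i\<in>UNIV. \<Sum>j\<in>UNIV.
          (cmod (X$i$j))\<^sup>2 + (cmod (X$j$i))\<^sup>2 + 2 * Re (X$i$j * cnj (X$j$i))) / 4"
    by (simp only: sum_divide_distrib)
  also have "\<dots> = (frobenius_sq X + frobenius_sq (transpose X) + 2 * Re (mtrace (X ** mconj X))) / 4"
    unfolding frobenius_sq_def transpose_def mtrace_mult_mconj Re_sum
    by (simp only: vec_lambda_beta sum.distrib sum_distrib_left)
  finally show ?thesis by (simp add: frobenius_sq_transpose)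
qed

lemma Re_mtrace_mult_mconj_le: "Re (mtrace (X ** mconj X)) \<le> frobenius_sq X"
proof -
  have "2 * Re (X$i$j * cnj (X$j$i)) \<le> (cmod (X$i$j))\<^sup>2 + (cmod (X$j$i))\<^sup>2" for i j
  proof -
    have "0 \<le> (Re (X$i$j) - Re (X$j$i))\<^sup>2 + (Im (X$i$j) - Im (X$j$i))\<^sup>2" by simp
    thus ?thesis by (simp only: cmod_power2) (simp add: power2_eq_square algebra_simps)
  qed
  hence "2 * Re (mtrace (X ** mconj X)) \<le> frobenius_sq X + frobenius_sq (transpose X)"
    unfolding mtrace_mult_mconj frobenius_sq_def transpose_def
    by (simp add: sum_distrib_left sum.distrib[symmetric] sum_mono)
  thus ?thesis by (simp add: frobenius_sq_transpose)
qed

lemma frobenius_sq_unitary: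
  fixes U :: "complex^'n^'n"
  assumes "unitary U" shows "frobenius_sq U = real CARD('n)"
proof -
  have "complex_of_real (frobenius_sq U) = complex_of_real (real CARD('n))"
    using frobenius_sq_eq_mtrace[of U] assms by (simp add: unitary_def mtrace_def mat_def)
  thus ?thesis by (simp only: of_real_eq_iff)
qed

lemma sym_part_mult_vec:
  assumes "(X - transpose X) *v v = 0"
  shows "sym_part X *v v = X *v v"
proof -
  have "(sym_part X *v v)$i = (X *v v)$i - ((X - transpose X) *v v)$i / 2" for i
  proof -
    have "(sym_part X *v v)$i = (\<Sum>j\<in>UNIV. X$i$j * v$j - (X$i$j - X$j$i) * v$j / 2)"
      by (simp add: sym_part_def matrix_vector_mult_def field_simps)
    also have "\<dots> = (X *v v)$i - ((X - transpose X) *v v)$i / 2"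
      by (simp add: transpose_def matrix_vector_mult_def sum_subtractf sum_divide_distrib)
    finally show ?thesis .
  qed
  thus ?thesis using assms by (simp add: vec_eq_iff)
qed

text \<open>In odd dimension the antisymmetric matrix \<open>U - U\<^sup>T\<close> is singular.\<close>
lemma unitary_sym_part_unit_vector:
  fixes U :: "complex^'n^'n"
  assumes U: "unitary U" and odd: "odd CARD('n)"
  obtains v where "norm v = 1" and "norm (sym_part U *v v) = 1"
proof -
  have "transpose (U - transpose U) = - (U - transpose U)" by (simp add: vec_eq_iff transpose_def)
  then obtain x where x: "x \<noteq> 0" "(U - transpose U) *v x = 0"
    using odd_antisymmetric_kernel[OF odd] by blast
  define v where "v = complex_of_real (1 / norm x) *s x"
  have v: "norm v = 1" using x(1) by (simp add: v_def norm_scale_vec norm_divide)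
  have "(U - transpose U) *v v = 0" by (simp add: v_def matrix_vector_mult_scale x(2))
  hence "norm (sym_part U *v v) = 1" using unitary_norm[OF U] v by (simp add: sym_part_mult_vec)
  with v show thesis by (rule that)
qed

lemma unitary_trace_bounds:
  fixes U :: "complex^'n^'n"
  assumes U: "unitary U" and odd: "odd CARD('n)"
  defines "t \<equiv> Re (mtrace (U ** mconj U))"
  shows "2 - real CARD('n) \<le> t" and "t \<le> real CARD('n)"
    and "cmod (mtrace U) \<le> 1 + sqrt ((real CARD('n) - 1) * (real CARD('n) - 2 + t) / 2)"
proof -
  let ?d = "real CARD('n)"
  show "t \<le> ?d"
    using Re_mtrace_mult_mconj_le[of U] frobenius_sq_unitary[OF U] by (simp add: t_def)
  have frob: "frobenius_sq (sym_part U) = (?d + t) / 2"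
    by (simp add: frobenius_sq_sym_part frobenius_sq_unitary[OF U] t_def)
  obtain v where "norm v = 1" "norm (sym_part U *v v) = 1"
    using unitary_sym_part_unit_vector[OF U odd] .
  from trace_bound_unit_vector[OF this]
  have "1 \<le> (?d + t) / 2" and "cmod (mtrace U) \<le> 1 + sqrt ((?d - 1) * ((?d + t) / 2 - 1))"
    unfolding frob mtrace_sym_part by auto
  moreover have "(?d - 1) * ((?d + t) / 2 - 1) = (?d - 1) * (?d - 2 + t) / 2" by (simp add: field_simps)
  ultimately show "2 - ?d \<le> t" and "cmod (mtrace U) \<le> 1 + sqrt ((?d - 1) * (?d - 2 + t) / 2)"
    by auto
qed

section \<open>Block-diagonal unitary matrices\<close>

definition block_start :: "nat \<Rightarrow> nat" where
  "block_start p = (if p < 3 then 0 else 3 + 2 * ((p - 3) div 2))"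

text \<open>The \<open>(3 + 2k) \<times> (3 + 2k)\<close> block-diagonal matrix \<open>M \<oplus> R \<oplus> \<dots> \<oplus> R\<close>, with a \<open>3 \<times> 3\<close> block
  \<open>M\<close> followed by \<open>k\<close> copies of a \<open>2 \<times> 2\<close> block \<open>R\<close>.\<close>
definition block_diag :: "(nat \<Rightarrow> nat \<Rightarrow> 'a::zero) \<Rightarrow> (nat \<Rightarrow> nat \<Rightarrow> 'a) \<Rightarrow> nat \<Rightarrow> nat \<Rightarrow> 'a" where
  "block_diag M R p q =
     (if block_start p \<noteq> block_start q then 0
      else if p < 3 then M p q else R (p - block_start p) (q - block_start q))"

lemma block_start_less3: "p < 3 \<Longrightarrow> block_start p = 0"
  by (simp add: block_start_def)

lemma block_start_ge3: "3 \<le> p \<Longrightarrow> 3 \<le> block_start p \<and> block_start p \<le> p \<and> p \<le> block_start p + 1"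
  unfolding block_start_def by presburger

lemma block_start_offset: "3 \<le> p \<Longrightarrow> r < 2 \<Longrightarrow> block_start (block_start p + r) = block_start p"
  unfolding block_start_def by presburger

lemma block_start_eq_less3: "block_start p = block_start q \<Longrightarrow> p < 3 \<longleftrightarrow> q < 3"
  unfolding block_start_def by presburger

lemma sum_within_block:
  assumes p: "p < 3 + 2 * k" and h: "\<And>r. block_start r \<noteq> block_start p \<Longrightarrow> h r = 0"
  shows "(\<Sum>r<3 + 2 * k. h r) =
         (if p < 3 then (\<Sum>r<3. h r) else (\<Sum>r<2. h (block_start p + r)))"
proof (cases "p < 3")
  case True
  have "(\<Sum>r<3 + 2 * k. h r) = (\<Sum>r<3. h r)"
    by (rule sum.mono_neutral_right)
       (use True in \<open>auto intro!: h simp: block_start_less3 dest: block_start_eq_less3\<close>)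
  thus ?thesis using True by simp
next
  case False
  let ?b = "block_start p"
  have "?b + 1 < 3 + 2 * k" using False p unfolding block_start_def by presburger
  hence "(\<Sum>r<3 + 2 * k. h r) = (\<Sum>r\<in>(\<lambda>r. ?b + r) ` {..<2}. h r)"
  proof (intro sum.mono_neutral_right ballI)
    fix i assume i: "i \<in> {..<3 + 2 * k} - (\<lambda>r. ?b + r) ` {..<2}"
    have "block_start i \<noteq> ?b"
    proof
      assume e: "block_start i = ?b"
      hence "3 \<le> i" using False block_start_eq_less3[OF e] by simp
      hence "i = ?b \<or> i = ?b + 1" using block_start_ge3[of i] e by auto
      thus False using i by force
    qed
    thus "h i = 0" by (rule h)
  qed auto
  also have "\<dots> = (\<Sum>r<2. h (?b + r))" by (simp add: sum.reindex)
  finally show ?thesis using False by simp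
qed

lemma block_diag_orthonormal_rows:
  assumes p: "p < 3 + 2 * k" and q: "q < 3 + 2 * k"
    and M: "\<And>p q. p < 3 \<Longrightarrow> q < 3 \<Longrightarrow> (\<Sum>r<3. M p r * cnj (M q r)) = (if p = q then 1 else 0)"
    and R: "\<And>p q. p < 2 \<Longrightarrow> q < 2 \<Longrightarrow> (\<Sum>r<2. R p r * cnj (R q r)) = (if p = q then 1 else 0)"
  shows "(\<Sum>r<3 + 2 * k. block_diag M R p r * cnj (block_diag M R q r)) = (if p = q then 1 else 0)"
proof -
  let ?b = "block_start p"
  have "(\<Sum>r<3 + 2 * k. block_diag M R p r * cnj (block_diag M R q r)) =
     (if p < 3 then (\<Sum>r<3. block_diag M R p r * cnj (block_diag M R q r))
      else (\<Sum>r<2. block_diag M R p (?b + r) * cnj (block_diag M R q (?b + r))))"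
    by (rule sum_within_block[OF p]) (simp add: block_diag_def)
  also have "\<dots> = (if p = q then 1 else 0)"
  proof (cases "block_start q = ?b")
    case False
    hence "p \<noteq> q" by auto
    moreover have "block_diag M R q r = 0" if "block_start r = ?b" for r
      using False that by (simp add: block_diag_def)
    ultimately show ?thesis using block_start_offset[of p]
      by (auto simp: block_diag_def block_start_less3 intro!: sum.neutral)
  next
    case True
    show ?thesis
    proof (cases "p < 3")
      case True
      hence "q < 3" using \<open>block_start q = ?b\<close> block_start_eq_less3 by blast
      have "(\<Sum>r<3. block_diag M R p r * cnj (block_diag M R q r)) = (\<Sum>r<3. M p r * cnj (M q r))"
        using \<open>p < 3\<close> \<open>q < 3\<close> by (intro sum.cong) (auto simp: block_diag_def block_start_less3)
      thus ?thesis using M \<open>p < 3\<close> \<open>q < 3\<close> by simp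
    next
      case False
      have b: "3 \<le> ?b" "?b \<le> p" "p \<le> ?b + 1" using block_start_ge3[of p] False by auto
      have q3: "\<not> q < 3" using \<open>block_start q = ?b\<close> False block_start_eq_less3 by blast
      have b': "?b \<le> q" "q \<le> ?b + 1" using block_start_ge3[of q] q3 \<open>block_start q = ?b\<close> by auto
      have "(\<Sum>r<2. block_diag M R p (?b + r) * cnj (block_diag M R q (?b + r))) =
            (\<Sum>r<2. R (p - ?b) r * cnj (R (q - ?b) r))"
        using False q3 \<open>block_start q = ?b\<close> block_start_offset[of p]
        by (intro sum.cong) (auto simp: block_diag_def)
      also have "\<dots> = (if p - ?b = q - ?b then 1 else 0)" using b b' by (intro R) auto
      also have "(p - ?b = q - ?b) = (p = q)" using b b' by auto
      finally show ?thesis using False by simp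
    qed
  qed
  finally show ?thesis .
qed

lemma sum_blockwise:
  "(\<Sum>p<3 + 2 * k. if p < 3 then f p else g (p - block_start p)) =
   (\<Sum>p<3. f p) + of_nat k * (g 0 + g 1)"
proof (induction k)
  case (Suc k)
  let ?h = "\<lambda>p. if p < 3 then f p else g (p - block_start p)"
  have "(\<Sum>p<3 + 2 * Suc k. ?h p) = (\<Sum>p<Suc (Suc (3 + 2 * k)). ?h p)"
    by (simp only: mult_Suc_right add_Suc_right numeral_2_eq_2 add_Suc add_0)
  also have "\<dots> = (\<Sum>p<3 + 2 * k. ?h p) + ?h (3 + 2 * k) + ?h (Suc (3 + 2 * k))"
    by (simp only: sum.lessThan_Suc)
  also have "?h (3 + 2 * k) = g 0" by (simp add: block_start_def)
  also have "?h (Suc (3 + 2 * k)) = g 1" by (simp add: block_start_def)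
  finally show ?case using Suc.IH by (simp add: algebra_simps)
qed simp

lemma block_diag_trace:
  "(\<Sum>p<3 + 2 * k. block_diag M R p p) = (\<Sum>p<3. M p p) + of_nat k * (R 0 0 + R 1 1)"
  using sum_blockwise[of "\<lambda>p. M p p" "\<lambda>j. R j j" k] by (simp add: block_diag_def)

lemma block_diag_trace_mult_conj:
  "(\<Sum>p<3 + 2 * k. \<Sum>r<3 + 2 * k. block_diag M R p r * cnj (block_diag M R r p)) =
   (\<Sum>p<3. \<Sum>r<3. M p r * cnj (M r p)) + of_nat k * (\<Sum>p<2. \<Sum>r<2. R p r * cnj (R r p))"
proof -
  let ?g = "\<lambda>j. \<Sum>r<2. R j r * cnj (R r j)"
  have "(\<Sum>r<3 + 2 * k. block_diag M R p r * cnj (block_diag M R r p)) =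
        (if p < 3 then (\<Sum>r<3. M p r * cnj (M r p)) else ?g (p - block_start p))"
    if p: "p < 3 + 2 * k" for p
  proof -
    have "(\<Sum>r<3 + 2 * k. block_diag M R p r * cnj (block_diag M R r p)) =
      (if p < 3 then (\<Sum>r<3. block_diag M R p r * cnj (block_diag M R r p))
       else (\<Sum>r<2. block_diag M R p (block_start p + r) * cnj (block_diag M R (block_start p + r) p)))"
      by (rule sum_within_block[OF p]) (simp add: block_diag_def)
    also have "\<dots> = (if p < 3 then (\<Sum>r<3. M p r * cnj (M r p)) else ?g (p - block_start p))"
      using block_start_offset[of p] block_start_ge3[of p]
      by (auto intro!: sum.cong simp: block_diag_def block_start_less3)
    finally show ?thesis .
  qed
  hence "(\<Sum>p<3 + 2 * k. \<Sum>r<3 + 2 * k. block_diag M R p r * cnj (block_diag M R r p)) =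
      (\<Sum>p<3 + 2 * k. if p < 3 then (\<Sum>r<3. M p r * cnj (M r p)) else ?g (p - block_start p))"
    by (intro sum.cong) auto
  also have "\<dots> = (\<Sum>p<3. \<Sum>r<3. M p r * cnj (M r p)) + of_nat k * (?g 0 + ?g 1)"
    by (rule sum_blockwise)
  also have "?g 0 + ?g 1 = (\<Sum>p<2. ?g p)" by (simp add: numeral_2_eq_2)
  finally show ?thesis .
qed

lemma exists_unitary_block_diag:
  fixes M R :: "nat \<Rightarrow> nat \<Rightarrow> complex"
  assumes d: "CARD('n) = 3 + 2 * k"
    and M: "\<And>p q. p < 3 \<Longrightarrow> q < 3 \<Longrightarrow> (\<Sum>r<3. M p r * cnj (M q r)) = (if p = q then 1 else 0)"
    and R: "\<And>p q. p < 2 \<Longrightarrow> q < 2 \<Longrightarrow> (\<Sum>r<2. R p r * cnj (R q r)) = (if p = q then 1 else 0)"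
  obtains U :: "complex^'n^'n" where "unitary U"
    and "mtrace U = (\<Sum>p<3. M p p) + of_nat k * (R 0 0 + R 1 1)"
    and "mtrace (U ** mconj U) = (\<Sum>p<3. \<Sum>r<3. M p r * cnj (M r p))
                                 + of_nat k * (\<Sum>p<2. \<Sum>r<2. R p r * cnj (R r p))"
proof -
  obtain f where f: "bij_betw f (UNIV::'n set) {..<3 + 2 * k}"
    using ex_bij_betw_finite_nat[of "UNIV::'n set"] by (auto simp: d atLeast0LessThan)
  have f_lt: "f i < 3 + 2 * k" for i using f by (auto simp: bij_betw_def)
  have f_eq: "f i = f j \<longleftrightarrow> i = j" for i j using f by (auto simp: bij_betw_def inj_on_def)
  have reindex: "(\<Sum>i\<in>UNIV. g (f i)) = (\<Sum>r<3 + 2 * k. g r)" for g :: "nat \<Rightarrow> complex"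
    by (rule sum.reindex_bij_betw[OF f])
  define U :: "complex^'n^'n" where "U = (\<chi> i j. block_diag M R (f i) (f j))"
  have "U ** madj U = mat 1"
  proof (clarsimp simp: vec_eq_iff)
    fix i j
    have "(U ** madj U)$i$j = (\<Sum>r<3 + 2 * k. block_diag M R (f i) r * cnj (block_diag M R (f j) r))"
      using reindex[of "\<lambda>r. block_diag M R (f i) r * cnj (block_diag M R (f j) r)"]
      by (simp add: U_def matrix_matrix_mult_def madj_def)
    also have "\<dots> = (if f i = f j then 1 else 0)"
      by (rule block_diag_orthonormal_rows[OF f_lt f_lt M R])
    finally show "(U ** madj U)$i$j = mat 1 $ i $ j" by (simp add: f_eq mat_def)
  qed
  hence "unitary U" by (simp add: unitary_iff)
  moreover have "mtrace U = (\<Sum>p<3. M p p) + of_nat k * (R 0 0 + R 1 1)"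
    using reindex[of "\<lambda>r. block_diag M R r r"] block_diag_trace[where k=k and M=M and R=R]
    by (simp add: U_def mtrace_def)
  moreover have "mtrace (U ** mconj U) = (\<Sum>p<3. \<Sum>r<3. M p r * cnj (M r p))
                    + of_nat k * (\<Sum>p<2. \<Sum>r<2. R p r * cnj (R r p))"
  proof -
    have "mtrace (U ** mconj U) =
        (\<Sum>i\<in>UNIV. \<Sum>j\<in>UNIV. block_diag M R (f i) (f j) * cnj (block_diag M R (f j) (f i)))"
      by (simp add: U_def mtrace_def matrix_matrix_mult_def mconj_def)
    also have "\<dots> = (\<Sum>i\<in>UNIV. \<Sum>r<3 + 2 * k. block_diag M R (f i) r * cnj (block_diag M R r (f i)))"
      by (intro sum.cong refl) (rule reindex)
    also have "\<dots> = (\<Sum>p<3 + 2 * k. \<Sum>r<3 + 2 * k. block_diag M R p r * cnj (block_diag M R r p))"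
      by (rule reindex)
    also have "\<dots> = (\<Sum>p<3. \<Sum>r<3. M p r * cnj (M r p))
                      + of_nat k * (\<Sum>p<2. \<Sum>r<2. R p r * cnj (R r p))"
      by (rule block_diag_trace_mult_conj)
    finally show ?thesis .
  qed
  ultimately show thesis using that by blast
qed

lemma sum_lessThan_3: "(\<Sum>r<3. g r) = g 0 + g 1 + g (2::nat)"
  by (simp add: numeral_3_eq_3 numeral_2_eq_2)

lemma sum_lessThan_2: "(\<Sum>r<2. g r) = g 0 + g (1::nat)"
  by (simp add: numeral_2_eq_2)

lemma less_3_cases: "(p::nat) < 3 \<Longrightarrow> p = 0 \<or> p = 1 \<or> p = 2"
  by auto

lemma less_2_cases: "(p::nat) < 2 \<Longrightarrow> p = 0 \<or> p = 1"
  by auto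

lemma upoint_eq:
  assumes "mtrace U = complex_of_real a" and "mtrace (U ** mconj U) = complex_of_real b"
  shows "upoint (U::complex^'n^'n) = (b / real CARD('n), a\<^sup>2 / real CARD('n))"
  using assms by (simp add: upoint_def)

lemma of_nat_half_card:
  "CARD('n) = 3 + 2 * k \<Longrightarrow> (of_nat k :: complex) = complex_of_real ((real CARD('n) - 3) / 2)"
  by (metis of_real_of_nat_eq add_diff_cancel_left' nonzero_mult_div_cancel_left of_nat_add
      of_nat_mult of_nat_numeral zero_neq_numeral)

text \<open>\<open>U = 1 \<oplus> R \<oplus> \<dots> \<oplus> R\<close> with \<open>R\<close> the real rotation with cosine \<open>c\<close>; as \<open>U\<close> is real,
  \<open>tr (U * conj U) = tr (U\<^sup>2)\<close>.\<close>
lemma unitary_rotation_blocks: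
  fixes c s :: real
  assumes d: "CARD('n) = 3 + 2 * k" and cs: "c\<^sup>2 + s\<^sup>2 = 1"
  obtains U :: "complex^'n^'n" where "unitary U"
    and "mtrace U = complex_of_real (1 + (real CARD('n) - 1) * c)"
    and "mtrace (U ** mconj U) = complex_of_real (1 + (real CARD('n) - 1) * (2 * c\<^sup>2 - 1))"
proof -
  define M :: "nat \<Rightarrow> nat \<Rightarrow> complex" where
    "M p q = [[1, 0, 0], [0, of_real c, of_real s], [0, - of_real s, of_real c]] ! p ! q" for p q
  define R :: "nat \<Rightarrow> nat \<Rightarrow> complex" where
    "R p q = [[of_real c, of_real s], [- of_real s, of_real c]] ! p ! q" for p q
  have cs': "complex_of_real c * complex_of_real c + complex_of_real s * complex_of_real s = 1"
    using cs by (metis of_real_1 of_real_add of_real_mult power2_eq_square)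
  have "(\<Sum>r<3. M p r * cnj (M q r)) = (if p = q then 1 else 0)" if "p < 3" "q < 3" for p q
    using less_3_cases[OF that(1)] less_3_cases[OF that(2)] cs'
    by (auto simp: M_def sum_lessThan_3 algebra_simps)
  moreover have "(\<Sum>r<2. R p r * cnj (R q r)) = (if p = q then 1 else 0)" if "p < 2" "q < 2" for p q
    using less_2_cases[OF that(1)] less_2_cases[OF that(2)] cs'
    by (auto simp: R_def sum_lessThan_2 algebra_simps)
  ultimately obtain U :: "complex^'n^'n" where U: "unitary U"
    "mtrace U = (\<Sum>p<3. M p p) + of_nat k * (R 0 0 + R 1 1)"
    "mtrace (U ** mconj U) = (\<Sum>p<3. \<Sum>r<3. M p r * cnj (M r p))
        + of_nat k * (\<Sum>p<2. \<Sum>r<2. R p r * cnj (R r p))"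
    using exists_unitary_block_diag[OF d] by blast
  have s2: "(complex_of_real c)\<^sup>2 = 1 - (complex_of_real s)\<^sup>2" using cs'
    by (simp add: power2_eq_square algebra_simps)
  have "mtrace (U ** mconj U) = complex_of_real (1 + (real CARD('n) - 1) * (2 * c\<^sup>2 - 1))"
    unfolding U(3) of_nat_half_card[OF d]
    by (simp add: M_def R_def sum_lessThan_3 sum_lessThan_2 field_simps power2_eq_square[symmetric] s2)
  moreover have "mtrace U = complex_of_real (1 + (real CARD('n) - 1) * c)"
    unfolding U(2) of_nat_half_card[OF d]
    by (simp add: M_def R_def sum_lessThan_3 sum_lessThan_2 field_simps)
  ultimately show thesis using that U(1) by blast
qed

text \<open>\<open>U = diag (1, \<omega>, \<omega>\<^sup>2) \<oplus> diag (1, -1) \<oplus> \<dots>\<close> with \<open>\<omega>\<close> a primitive cube root of unity.\<close>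
lemma traceless_unitary_max_conj_trace:
  assumes d: "CARD('n) = 3 + 2 * k"
  obtains U :: "complex^'n^'n" where "unitary U" and "mtrace U = 0"
    and "mtrace (U ** mconj U) = complex_of_real (real CARD('n))"
proof -
  define w where "w = Complex (-1/2) (sqrt 3 / 2)"
  have w1: "w * cnj w = 1" "cnj w * w = 1"
    by (simp_all add: w_def complex_eq_iff power2_eq_square)
  define M :: "nat \<Rightarrow> nat \<Rightarrow> complex" where "M p q = [[1, 0, 0], [0, w, 0], [0, 0, cnj w]] ! p ! q" for p q
  define R :: "nat \<Rightarrow> nat \<Rightarrow> complex" where "R p q = [[1, 0], [0, -1]] ! p ! q" for p q
  have "(\<Sum>r<3. M p r * cnj (M q r)) = (if p = q then 1 else 0)" if "p < 3" "q < 3" for p q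
    using less_3_cases[OF that(1)] less_3_cases[OF that(2)] w1 by (auto simp: M_def sum_lessThan_3)
  moreover have "(\<Sum>r<2. R p r * cnj (R q r)) = (if p = q then 1 else 0)" if "p < 2" "q < 2" for p q
    using less_2_cases[OF that(1)] less_2_cases[OF that(2)] by (auto simp: R_def sum_lessThan_2)
  ultimately obtain U :: "complex^'n^'n" where U: "unitary U"
    "mtrace U = (\<Sum>p<3. M p p) + of_nat k * (R 0 0 + R 1 1)"
    "mtrace (U ** mconj U) = (\<Sum>p<3. \<Sum>r<3. M p r * cnj (M r p))
        + of_nat k * (\<Sum>p<2. \<Sum>r<2. R p r * cnj (R r p))"
    using exists_unitary_block_diag[OF d] by blast
  have "mtrace U = 0"
    unfolding U(2) by (simp add: M_def R_def sum_lessThan_3 sum_lessThan_2 w_def complex_eq_iff)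
  moreover have "mtrace (U ** mconj U) = complex_of_real (real CARD('n))"
    unfolding U(3) of_nat_half_card[OF d] using w1
    by (simp add: M_def R_def sum_lessThan_3 sum_lessThan_2 field_simps)
  ultimately show thesis using that U(1) by blast
qed

text \<open>Every \<open>2 \<times> 2\<close> block satisfies \<open>R * conj R = -I\<close>, and the \<open>3 \<times> 3\<close> block is a traceless
  unitary with \<open>tr (M * conj M) = -1\<close>.\<close>
lemma traceless_unitary_min_conj_trace:
  assumes d: "CARD('n) = 3 + 2 * k"
  obtains U :: "complex^'n^'n" where "unitary U" and "mtrace U = 0"
    and "mtrace (U ** mconj U) = complex_of_real (2 - real CARD('n))"
proof -
  define h where "h = 1 / sqrt 2"
  have h2: "h * h = 1/2" by (simp add: h_def)
  define M :: "nat \<Rightarrow> nat \<Rightarrow> complex" where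
    "M p q = [[Complex (1/2) 0, Complex 0 (-1/2), Complex 0 (-h)],
              [Complex 0 (-1/2), Complex (-1/2) 0, Complex h 0],
              [Complex 0 h, Complex (-h) 0, 0]] ! p ! q" for p q
  define R :: "nat \<Rightarrow> nat \<Rightarrow> complex" where "R p q = [[0, 1], [-1, 0]] ! p ! q" for p q
  have "(\<Sum>r<3. M p r * cnj (M q r)) = (if p = q then 1 else 0)" if "p < 3" "q < 3" for p q
    using less_3_cases[OF that(1)] less_3_cases[OF that(2)] h2
    by (auto simp: M_def sum_lessThan_3 complex_eq_iff)
  moreover have "(\<Sum>r<2. R p r * cnj (R q r)) = (if p = q then 1 else 0)" if "p < 2" "q < 2" for p q
    using less_2_cases[OF that(1)] less_2_cases[OF that(2)] by (auto simp: R_def sum_lessThan_2)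
  ultimately obtain U :: "complex^'n^'n" where U: "unitary U"
    "mtrace U = (\<Sum>p<3. M p p) + of_nat k * (R 0 0 + R 1 1)"
    "mtrace (U ** mconj U) = (\<Sum>p<3. \<Sum>r<3. M p r * cnj (M r p))
        + of_nat k * (\<Sum>p<2. \<Sum>r<2. R p r * cnj (R r p))"
    using exists_unitary_block_diag[OF d] by blast
  have "mtrace U = 0"
    unfolding U(2) by (simp add: M_def R_def sum_lessThan_3 sum_lessThan_2 complex_eq_iff)
  moreover have "mtrace (U ** mconj U) = complex_of_real (2 - real CARD('n))"
    unfolding U(3) of_nat_half_card[OF d] using h2
    by (simp add: M_def R_def sum_lessThan_3 sum_lessThan_2 complex_eq_iff field_simps)
  ultimately show thesis using that U(1) by blast
qed

section \<open>Strict concavity of the boundary curve\<close>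

definition strictly_concave_on :: "real set \<Rightarrow> (real \<Rightarrow> real) \<Rightarrow> bool" where
  "strictly_concave_on S f \<longleftrightarrow>
     (\<forall>x\<in>S. \<forall>y\<in>S. x \<noteq> y \<longrightarrow>
        (\<forall>u. 0 < u \<longrightarrow> u < 1 \<longrightarrow> (1 - u) * f x + u * f y < f ((1 - u) * x + u * y)))"

lemma strictly_concave_onD:
  "strictly_concave_on S f \<Longrightarrow> x \<in> S \<Longrightarrow> y \<in> S \<Longrightarrow> x \<noteq> y \<Longrightarrow> 0 < u \<Longrightarrow> u < 1 \<Longrightarrow>
   (1 - u) * f x + u * f y < f ((1 - u) * x + u * y)"
  by (simp add: strictly_concave_on_def)

lemma strictly_concave_on_subset:
  "strictly_concave_on S f \<Longrightarrow> T \<subseteq> S \<Longrightarrow> strictly_concave_on T f"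
  by (auto simp: strictly_concave_on_def)

lemma strictly_concave_on_cong:
  assumes "convex S" and "\<And>x. x \<in> S \<Longrightarrow> f x = g x" and "strictly_concave_on S f"
  shows "strictly_concave_on S g"
  using assms unfolding strictly_concave_on_def convex_alt by (simp add: algebra_simps)

lemma strictly_concave_on_imp_concave_on:
  assumes "convex S" and "strictly_concave_on S f"
  shows "concave_on S f"
proof (rule concave_on_linorderI[OF _ assms(1)])
  fix t x y :: real assume "0 < t" "t < 1" "x \<in> S" "y \<in> S" "x < y"
  thus "(1 - t) * f x + t * f y \<le> f ((1 - t) *\<^sub>R x + t *\<^sub>R y)"
    using strictly_concave_onD[OF assms(2)] by fastforce
qed

lemma strictly_concave_on_sqrt: "strictly_concave_on {0..} sqrt"
  unfolding strictly_concave_on_def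
proof (intro ballI impI allI)
  fix s t u :: real assume st: "s \<in> {0..}" "t \<in> {0..}" "s \<noteq> t" and u: "0 < u" "u < 1"
  have "((1 - u) * sqrt s + u * sqrt t)\<^sup>2 =
        (1 - u) * s + u * t - u * (1 - u) * (sqrt s - sqrt t)\<^sup>2"
    using st by (simp add: power2_eq_square algebra_simps)
  moreover have "0 < u * (1 - u) * (sqrt s - sqrt t)\<^sup>2" using st u by simp
  ultimately show "(1 - u) * sqrt s + u * sqrt t < sqrt ((1 - u) * s + u * t)"
    by (intro real_less_rsqrt) linarith
qed

lemma strictly_concave_on_sqrt_affine:
  fixes a b c k e :: real
  assumes "0 < k" and "0 < c"
  shows "strictly_concave_on {a..} (\<lambda>x. c * sqrt (k * (x - a)) + b * x + e)"
  unfolding strictly_concave_on_def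
proof (intro ballI impI allI)
  fix x y u :: real assume xy: "x \<in> {a..}" "y \<in> {a..}" "x \<noteq> y" and u: "0 < u" "u < 1"
  have "(1 - u) * sqrt (k * (x - a)) + u * sqrt (k * (y - a))
        < sqrt ((1 - u) * (k * (x - a)) + u * (k * (y - a)))"
    using xy u assms(1) by (intro strictly_concave_onD[OF strictly_concave_on_sqrt]) auto
  also have "(1 - u) * (k * (x - a)) + u * (k * (y - a)) = k * ((1 - u) * x + u * y - a)"
    by (simp add: algebra_simps)
  finally show "(1 - u) * (c * sqrt (k * (x - a)) + b * x + e) + u * (c * sqrt (k * (y - a)) + b * y + e)
      < c * sqrt (k * ((1 - u) * x + u * y - a)) + b * ((1 - u) * x + u * y) + e"
    using assms(2) by (simp add: algebra_simps) (metis distrib_left mult_strict_left_mono)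
qed

text \<open>With \<open>x\<^sub>0 = -1 + 2/d\<close> the radicand of \<open>m\<close> is \<open>\<kappa> (x - x\<^sub>0)\<close>, \<open>\<kappa> = (1 - 1/d)/2\<close>, so
  \<open>d m(x)\<^sup>2\<close> is \<open>2 \<surd>(\<kappa> (x - x\<^sub>0))\<close> plus an affine function.\<close>
lemma mfun_sq_eq:
  assumes "1 \<le> d" and "-1 + 2/d \<le> x"
  shows "d * (mfun d x)\<^sup>2 = 2 * sqrt ((1 - 1/d) / 2 * (x - (-1 + 2/d)))
           + d * ((1 - 1/d) / 2) * x + (1/d - d * ((1 - 1/d) / 2) * (-1 + 2/d))"
proof -
  have "0 \<le> (1 - 1/d) / 2 * (x - (-1 + 2/d))"
    using assms by (intro mult_nonneg_nonneg) auto
  hence "(sqrt ((1 - 1/d) / 2 * (x - (-1 + 2/d))))\<^sup>2 = (1 - 1/d) / 2 * (x - (-1 + 2/d))"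
    by simp
  moreover have "(1/2) * (1 - 1/d) * (1 - 2/d + x) = (1 - 1/d) / 2 * (x - (-1 + 2/d))"
    by (simp add: algebra_simps)
  ultimately show ?thesis
    using assms(1) by (simp add: mfun_def power2_eq_square field_simps)
qed

lemma strictly_concave_on_mfun_sq:
  assumes "1 < d"
  shows "strictly_concave_on {-1 + 2/d..} (\<lambda>x. d * (mfun d x)\<^sup>2)"
proof (rule strictly_concave_on_cong)
  show "strictly_concave_on {-1 + 2/d..} (\<lambda>x. 2 * sqrt ((1 - 1/d) / 2 * (x - (-1 + 2/d)))
           + d * ((1 - 1/d) / 2) * x + (1/d - d * ((1 - 1/d) / 2) * (-1 + 2/d)))"
    using assms by (intro strictly_concave_on_sqrt_affine) auto
qed (use assms in \<open>auto simp: mfun_sq_eq\<close>)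

lemma mfun_pos: "1 \<le> d \<Longrightarrow> -1 + 2/d \<le> x \<Longrightarrow> 0 < mfun d x"
  unfolding mfun_def by (intro add_nonneg_pos real_sqrt_ge_zero mult_nonneg_nonneg) auto

lemma mfun_sq_at_trace:
  assumes d: "1 < d" and t: "2 - d \<le> t"
  shows "d * (mfun d (t/d))\<^sup>2 = (1 + sqrt ((d - 1) * (d - 2 + t) / 2))\<^sup>2 / d"
proof -
  define Q where "Q = (d - 1) * (d - 2 + t) / 2"
  have "(1/2) * (1 - 1/d) * (1 - 2/d + t/d) = Q / d\<^sup>2"
    using d by (simp add: Q_def field_simps power2_eq_square)
  hence "mfun d (t/d) = (sqrt Q + 1) / d"
    using d by (simp add: mfun_def real_sqrt_divide add_divide_distrib)
  thus ?thesis using d by (simp add: Q_def power_divide power2_eq_square add.commute)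
qed

section \<open>Extreme points of the region under a concave graph\<close>

definition region_under :: "real \<Rightarrow> real \<Rightarrow> (real \<Rightarrow> real) \<Rightarrow> (real \<times> real) set" where
  "region_under a b g = {(x, y). a \<le> x \<and> x \<le> b \<and> 0 \<le> y \<and> y \<le> g x}"

lemma convex_region_under:
  assumes "concave_on {a..b} g"
  shows "convex (region_under a b g)"
  unfolding convex_alt
proof (intro ballI allI impI)
  fix p q :: "real \<times> real" and u :: real
  assume p: "p \<in> region_under a b g" and q: "q \<in> region_under a b g" and u: "0 \<le> u \<and> u \<le> 1"
  obtain xp yp xq yq where pq: "p = (xp, yp)" "q = (xq, yq)" by fastforce
  have bounds: "a \<le> xp" "xp \<le> b" "0 \<le> yp" "yp \<le> g xp" "a \<le> xq" "xq \<le> b" "0 \<le> yq" "yq \<le> g xq"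
    using p q pq by (auto simp: region_under_def)
  have "(1 - u) * yp + u * yq \<le> (1 - u) * g xp + u * g xq"
    using bounds u by (intro add_mono mult_left_mono) auto
  also have "\<dots> \<le> g ((1 - u) * xp + u * xq)"
    using concave_onD[OF assms, of u xp xq] bounds u by simp
  finally have "(1 - u) * yp + u * yq \<le> g ((1 - u) * xp + u * xq)" .
  moreover have "a \<le> (1 - u) * xp + u * xq"
  proof -
    have "a = (1 - u) * a + u * a" by (simp add: algebra_simps)
    also have "\<dots> \<le> (1 - u) * xp + u * xq" using bounds u by (intro add_mono mult_left_mono) auto
    finally show ?thesis .
  qed
  moreover have "(1 - u) * xp + u * xq \<le> b"
  proof -
    have "(1 - u) * xp + u * xq \<le> (1 - u) * b + u * b" using bounds u by (intro add_mono mult_left_mono) auto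
    also have "\<dots> = b" by (simp add: algebra_simps)
    finally show ?thesis .
  qed
  ultimately show "(1 - u) *\<^sub>R p + u *\<^sub>R q \<in> region_under a b g"
    using bounds u by (simp add: pq region_under_def)
qed

lemma convex_comb_eq_lower_bound:
  fixes a s t u :: real
  assumes "a \<le> s" "a \<le> t" "0 < u" "u < 1" "(1 - u) * s + u * t = a"
  shows "s = a \<and> t = a"
proof -
  have "(1 - u) * (s - a) + u * (t - a) = 0" using assms(5) by (simp add: algebra_simps)
  moreover have "0 \<le> (1 - u) * (s - a)" "0 \<le> u * (t - a)" using assms by simp_all
  ultimately have "(1 - u) * (s - a) = 0" "u * (t - a) = 0" by linarith+
  thus ?thesis using assms by simp
qed

lemma convex_comb_eq_upper_bound:
  fixes b s t u :: real
  assumes "s \<le> b" "t \<le> b" "0 < u" "u < 1" "(1 - u) * s + u * t = b"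
  shows "s = b \<and> t = b"
  using convex_comb_eq_lower_bound[of "-b" "-s" "-t" u] assms by (simp add: algebra_simps)

lemma extreme_point_of_region_under_imp_boundary:
  assumes "p extreme_point_of region_under a b g" and "0 \<le> g a" and "0 \<le> g b"
  shows "p \<in> {(a, 0), (b, 0)} \<union> {(x, g x) | x. a \<le> x \<and> x \<le> b}"
proof -
  obtain x y where p: "p = (x, y)" by fastforce
  have xy: "a \<le> x" "x \<le> b" "0 \<le> y" "y \<le> g x"
    using assms(1) p by (auto simp: extreme_point_of_def region_under_def)
  have no_segment: "p \<notin> open_segment q r" if "q \<in> region_under a b g" "r \<in> region_under a b g" for q r
    using assms(1) that by (simp add: extreme_point_of_def)
  have "y = g x \<or> (y = 0 \<and> (x = a \<or> x = b))"
  proof (rule ccontr)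
    assume "\<not> ?thesis"
    then consider "0 < y" "y < g x" | "y = 0" "a < x" "x < b" using xy by fastforce
    thus False
    proof cases
      case 1
      have "p \<in> open_segment (x, 0) (x, g x)"
        using 1 by (auto simp: in_segment p field_simps intro!: exI[of _ "y / g x"])
      thus False using no_segment xy by (auto simp: region_under_def)
    next
      case 2
      have "p \<in> open_segment (a, 0) (b, 0)"
        using 2 by (auto simp: in_segment p field_simps intro!: exI[of _ "(x - a) / (b - a)"])
      thus False using no_segment 2 assms(2,3) by (auto simp: region_under_def)
    qed
  qed
  thus ?thesis using p xy by auto
qed

lemma boundary_imp_extreme_point_of_region_under:
  assumes g: "strictly_concave_on {a..b} g" and nonneg: "\<And>x. a \<le> x \<Longrightarrow> x \<le> b \<Longrightarrow> 0 \<le> g x"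
    and "a \<le> b" and p: "p \<in> {(a, 0), (b, 0)} \<union> {(x, g x) | x. a \<le> x \<and> x \<le> b}"
  shows "p extreme_point_of region_under a b g"
  unfolding extreme_point_of_def
proof (intro conjI ballI)
  show "p \<in> region_under a b g" using p nonneg \<open>a \<le> b\<close> by (auto simp: region_under_def)
next
  fix q r assume q: "q \<in> region_under a b g" and r: "r \<in> region_under a b g"
  show "p \<notin> open_segment q r"
  proof
    assume "p \<in> open_segment q r"
    then obtain u where u: "0 < u" "u < 1" and "q \<noteq> r" and pu: "p = (1 - u) *\<^sub>R q + u *\<^sub>R r"
      by (auto simp: in_segment)
    obtain xq yq xr yr where qr: "q = (xq, yq)" "r = (xr, yr)" by fastforce
    have bounds: "a \<le> xq" "xq \<le> b" "0 \<le> yq" "yq \<le> g xq" "a \<le> xr" "xr \<le> b" "0 \<le> yr" "yr \<le> g xr"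
      using q r qr by (auto simp: region_under_def)
    have fst_p: "fst p = (1 - u) * xq + u * xr" and snd_p: "snd p = (1 - u) * yq + u * yr"
      using pu qr by simp_all
    have "xq = xr \<and> yq = yr"
    proof -
      consider "p = (a, 0)" | "p = (b, 0)" | x where "p = (x, g x)" "a \<le> x" "x \<le> b"
        using p by blast
      thus ?thesis
      proof cases
        case 1 thus ?thesis
          using convex_comb_eq_lower_bound[of a xq xr u] convex_comb_eq_lower_bound[of 0 yq yr u]
            bounds u fst_p snd_p by simp
      next
        case 2 thus ?thesis
          using convex_comb_eq_upper_bound[of xq b xr u] convex_comb_eq_lower_bound[of 0 yq yr u]
            bounds u fst_p snd_p by simp
      next
        case (3 x)
        have "g x \<le> (1 - u) * g xq + u * g xr"
          using 3 snd_p bounds u by (auto intro!: add_mono mult_left_mono)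
        hence "xq = xr"
          using strictly_concave_onD[OF g, of xq xr u] 3 fst_p bounds u by fastforce
        thus ?thesis
          using convex_comb_eq_upper_bound[of yq "g x" yr u] 3 fst_p snd_p bounds u
          by (simp add: algebra_simps)
      qed
    qed
    thus False using \<open>q \<noteq> r\<close> qr by simp
  qed
qed

lemma convex_hull_eq_region_under:
  assumes "a < b" and "concave_on {a..b} g" and P: "P \<subseteq> region_under a b g"
    and "(a, 0) \<in> P" and "(b, 0) \<in> P" and graph: "\<And>x. a \<le> x \<Longrightarrow> x \<le> b \<Longrightarrow> (x, g x) \<in> P"
  shows "convex hull P = region_under a b g"
proof
  show "convex hull P \<subseteq> region_under a b g"
    using P convex_region_under[OF assms(2)] by (rule hull_minimal)
  show "region_under a b g \<subseteq> convex hull P"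
  proof (clarsimp simp: region_under_def)
    fix x y assume xy: "a \<le> x" "x \<le> b" "0 \<le> y" "y \<le> g x"
    have bottom: "(x, 0) \<in> convex hull P"
    proof -
      define l where "l = (x - a) / (b - a)"
      have "l * (b - a) = x - a" using \<open>a < b\<close> by (simp add: l_def)
      hence "(x, 0) = (1 - l) *\<^sub>R (a, 0) + l *\<^sub>R (b, 0::real)"
        by (simp add: algebra_simps)
      moreover have "0 \<le> l" "l \<le> 1" using xy \<open>a < b\<close> by (simp_all add: l_def field_simps)
      ultimately show ?thesis
        using assms(4,5) by (metis convexD_alt convex_convex_hull hull_inc)
    qed
    show "(x, y) \<in> convex hull P"
    proof (cases "y = 0")
      case False
      define l where "l = y / g x"
      have gx: "0 < g x" using False xy by linarith
      hence "(x, y) = (1 - l) *\<^sub>R (x, 0) + l *\<^sub>R (x, g x)"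
        by (simp add: l_def algebra_simps)
      moreover have "0 \<le> l" "l \<le> 1" using xy gx by (simp_all add: l_def)
      ultimately show ?thesis
        using bottom graph[OF xy(1,2)] by (metis convexD_alt convex_convex_hull hull_inc)
    qed (use bottom in simp)
  qed
qed

section \<open>The convex hull of the points of unitary matrices\<close>

lemma upoint_in_region_under:
  fixes U :: "complex^'n^'n"
  assumes U: "unitary U" and odd: "odd CARD('n)" and d3: "3 \<le> CARD('n)"
  defines "d \<equiv> real CARD('n)"
  shows "upoint U \<in> region_under (-1 + 2/d) 1 (\<lambda>x. d * (mfun d x)\<^sup>2)"
proof -
  define t where "t = Re (mtrace (U ** mconj U))"
  define T where "T = cmod (mtrace U)"
  have d1: "1 < d" using d3 by (simp add: d_def)
  have t: "2 - d \<le> t" "t \<le> d" and T: "T \<le> 1 + sqrt ((d - 1) * (d - 2 + t) / 2)"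
    using unitary_trace_bounds[OF U odd] by (simp_all add: d_def t_def T_def)
  have "-1 + 2/d \<le> t/d"
  proof -
    have "(2 - d) / d \<le> t / d" using t d1 by (simp add: divide_right_mono)
    moreover have "(2 - d) / d = -1 + 2/d" using d1 by (simp add: field_simps)
    ultimately show ?thesis by simp
  qed
  moreover have "t/d \<le> 1" using t d1 by simp
  moreover have "T\<^sup>2 / d \<le> d * (mfun d (t/d))\<^sup>2"
  proof -
    have "T\<^sup>2 \<le> (1 + sqrt ((d - 1) * (d - 2 + t) / 2))\<^sup>2"
      using T by (intro power_mono) (auto simp: T_def)
    thus ?thesis unfolding mfun_sq_at_trace[OF d1 t(1)] using d1 by (simp add: divide_right_mono)
  qed
  moreover have "upoint U = (t/d, T\<^sup>2/d)" by (simp add: upoint_def d_def t_def T_def)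
  ultimately show ?thesis using d1 by (simp add: region_under_def)
qed

text \<open>The point \<open>(x, d m(x)\<^sup>2)\<close> is attained by rotation blocks with cosine
  \<open>c = d \<surd>\<sigma> / (d - 1)\<close>, where \<open>\<sigma>\<close> is the radicand in \<open>m(x)\<close>.\<close>
lemma upoint_graph_mfun:
  defines "d \<equiv> real CARD('n)"
  assumes card: "CARD('n) = 3 + 2 * k" and x: "-1 + 2/d \<le> x" "x \<le> 1"
  shows "(x, d * (mfun d x)\<^sup>2) \<in> {upoint U | U :: complex^'n^'n. unitary U}"
proof -
  have d1: "1 < d" using card by (simp add: d_def)
  define w where "w = (1/2) * (1 - 1/d) * (1 - 2/d + x)"
  have w0: "0 \<le> w" unfolding w_def using d1 x by (intro mult_nonneg_nonneg) auto
  define c where "c = d * sqrt w / (d - 1)"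
  have c2: "(d - 1) * c\<^sup>2 = (d - 2 + d * x) / 2"
  proof -
    have "(d - 1) * c\<^sup>2 = d\<^sup>2 * w / (d - 1)"
      using d1 w0 by (simp add: c_def power_divide power_mult_distrib power2_eq_square)
    also have "d\<^sup>2 * w = (d - 1) * ((d - 2 + d * x) / 2)"
      using d1 by (simp add: w_def field_simps power2_eq_square)
    also have "(d - 1) * ((d - 2 + d * x) / 2) / (d - 1) = (d - 2 + d * x) / 2"
      using d1 by (intro nonzero_mult_div_cancel_left) simp
    finally show ?thesis .
  qed
  have "c\<^sup>2 \<le> 1"
  proof -
    have "(d - 1) * c\<^sup>2 \<le> (d - 1) * 1" unfolding c2 using x d1 by (simp add: field_simps)
    thus ?thesis using d1 by simp
  qed
  then obtain s where cs: "c\<^sup>2 + s\<^sup>2 = 1" by (intro that[of "sqrt (1 - c\<^sup>2)"]) simp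
  obtain U :: "complex^'n^'n" where U: "unitary U"
    "mtrace U = complex_of_real (1 + (d - 1) * c)"
    "mtrace (U ** mconj U) = complex_of_real (1 + (d - 1) * (2 * c\<^sup>2 - 1))"
    using unitary_rotation_blocks[OF card cs] unfolding d_def by blast
  have "upoint U = ((1 + (d - 1) * (2 * c\<^sup>2 - 1)) / d, (1 + (d - 1) * c)\<^sup>2 / d)"
    using upoint_eq[OF U(2,3)] by (simp add: d_def)
  also have "(1 + (d - 1) * (2 * c\<^sup>2 - 1)) / d = x"
  proof -
    have "1 + (d - 1) * (2 * c\<^sup>2 - 1) = 1 + 2 * ((d - 1) * c\<^sup>2) - (d - 1)"
      by (simp add: algebra_simps)
    also have "\<dots> = d * x" unfolding c2 by (simp add: field_simps)
    finally show ?thesis using d1 by simp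
  qed
  also have "(1 + (d - 1) * c)\<^sup>2 / d = d * (mfun d x)\<^sup>2"
  proof -
    have "(d - 1) * c = d * sqrt w" using d1 by (simp add: c_def)
    thus ?thesis using d1 by (simp add: mfun_def w_def power2_eq_square field_simps)
  qed
  finally show ?thesis using U(1) by (auto intro!: exI[of _ U])
qed

lemma upoint_corners:
  assumes card: "CARD('n) = 3 + 2 * k"
  defines "d \<equiv> real CARD('n)"
  shows "(-1 + 2/d, 0) \<in> {upoint U | U :: complex^'n^'n. unitary U}"
    and "(1, 0) \<in> {upoint U | U :: complex^'n^'n. unitary U}"
proof -
  have d1: "1 < d" using card by (simp add: d_def)
  obtain U :: "complex^'n^'n" where U: "unitary U" "mtrace U = 0"
    "mtrace (U ** mconj U) = complex_of_real (2 - d)"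
    using traceless_unitary_min_conj_trace[OF card] unfolding d_def by blast
  have "upoint U = ((2 - d) / d, 0\<^sup>2 / d)" using upoint_eq[of U 0 "2 - d"] U by (simp add: d_def)
  moreover have "(2 - d) / d = -1 + 2/d" using d1 by (simp add: field_simps)
  ultimately show "(-1 + 2/d, 0) \<in> {upoint U | U :: complex^'n^'n. unitary U}"
    using U(1) by (auto intro!: exI[of _ U])
  obtain V :: "complex^'n^'n" where V: "unitary V" "mtrace V = 0"
    "mtrace (V ** mconj V) = complex_of_real d"
    using traceless_unitary_max_conj_trace[OF card] unfolding d_def by blast
  have "upoint V = (d / d, 0\<^sup>2 / d)" using upoint_eq[of V 0 d] V by (simp add: d_def)
  thus "(1, 0) \<in> {upoint U | U :: complex^'n^'n. unitary U}"
    using V(1) d1 by (auto intro!: exI[of _ V])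
qed

theorem theorem5:
  fixes d :: real
  assumes "odd CARD('n)" and "CARD('n) \<ge> 3"
    and "d = real CARD('n)"
  shows "{p. p extreme_point_of
              convex hull {upoint (U :: complex^'n^'n) | U. unitary U}}
         = {(-1 + 2/d, 0), (1, 0)} \<union>
           {(x, d * (mfun d x)\<^sup>2) | x. -1 + 2/d \<le> x \<and> x \<le> 1}"
proof -
  have "CARD('n) = 3 + 2 * ((CARD('n) - 3) div 2)" using assms(1,2) by presburger
  then obtain k where card: "CARD('n) = 3 + 2 * k" ..
  let ?P = "{upoint (U :: complex^'n^'n) | U. unitary U}"
  let ?a = "-1 + 2/d" and ?g = "\<lambda>x. d * (mfun d x)\<^sup>2"
  have d1: "1 < d" and a1: "?a < 1" using assms(2,3) by (simp_all add: field_simps)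
  have concave: "strictly_concave_on {?a..1} ?g"
    using strictly_concave_on_mfun_sq[OF d1] by (rule strictly_concave_on_subset) auto
  have pos: "0 \<le> ?g x" if "?a \<le> x" for x using mfun_pos[of d x] d1 that by simp
  have "convex hull ?P = region_under ?a 1 ?g"
  proof (rule convex_hull_eq_region_under[OF a1 strictly_concave_on_imp_concave_on[OF _ concave]])
    show "?P \<subseteq> region_under ?a 1 ?g"
      using upoint_in_region_under assms by blast
  qed (use upoint_corners[OF card] upoint_graph_mfun[OF card] assms(3) in auto)
  thus ?thesis
    using extreme_point_of_region_under_imp_boundary[of _ ?a 1 ?g]
      boundary_imp_extreme_point_of_region_under[OF concave pos] pos a1 by auto
qed

end
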